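(* Let $p$ be a prime, $m\ge 1$ and $r$ integers with $r^p\equiv 1 \pmod m$, and let $G=\langle x, y\mid x^p=y^m=1,\ x^{-1}yx=y^r\rangle$ (so $G\cong C_p\ltimes C_m$, $|G|=pm$), where $p$ is the smallest prime divisor of $|G|$ and $\gcd(p(r-1), m)=1$. Let $N=\langle y\rangle$, let $M$ be any subgroup of $N$, let $u\in N$, and let $0\le s<s'\le p-1$ be integers. Then: (i) if $u^{r^s}\in M$, then $\{u, u^{r},\ldots, u^{r^{p-1}}\}\subseteq M$; (ii) if $u^{r^s}$ and $u^{r^{s'}}$ lie in the same coset of $M$, then $\{u, u^{r},\ldots, u^{r^{p-1}}\}\subseteq M$; (iii) if $u\neq 1$, then $u^{r^s}\neq u^{r^{s'}}$. *)

theory Defs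
  imports "HOL-Algebra.Algebra" "HOL-Number_Theory.Number_Theory"
begin

end

theory Submission
  imports Defs
begin

text \<open>Every \<open>u\<close> in \<open>\<langle>y\<rangle>\<close> satisfies \<open>u [^] m = \<one>\<close>, so for \<open>c\<close> coprime to \<open>m\<close> the
  element \<open>u\<close> is a power of \<open>u [^] c\<close>; thus \<open>u [^] c \<in> M\<close> forces \<open>u \<in> M\<close>, and with it the
  whole orbit of \<open>u\<close> under \<open>v \<mapsto> v [^] r\<close>. All three claims follow with \<open>c = r ^ s\<close> or
  \<open>c = r ^ s' - r ^ s = r ^ s * (r ^ t - 1)\<close>, where \<open>0 < t = s' - s < p\<close> (for (iii) take
  \<open>M = {\<one>}\<close>). Here \<open>r\<close> is a unit modulo \<open>m\<close> because \<open>r ^ p \<equiv> 1\<close>, and a common divisor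
  \<open>d\<close> of \<open>r ^ t - 1\<close> and \<open>m\<close> satisfies \<open>r ^ t \<equiv> r ^ p \<equiv> 1 (mod d)\<close> with \<open>gcd t p = 1\<close>,
  hence \<open>r \<equiv> 1 (mod d)\<close>, so \<open>d = 1\<close> as \<open>gcd (r - 1) m = 1\<close>.\<close>

lemma coprime_power_minus_one:
  fixes r :: int and a t n :: nat
  assumes "[r ^ a = 1] (mod int n)" and "coprime t a" and "0 < t"
    and "coprime (r - 1) (int n)"
  shows "coprime (r ^ t - 1) (int n)"
proof -
  define d where "d = gcd (r ^ t - 1) (int n)"
  have d_dvd: "d dvd int n" "d dvd r ^ t - 1"
    unfolding d_def by auto
  then have rt: "[r ^ t = 1] (mod d)" and ra: "[r ^ a = 1] (mod d)"
    using assms(1) cong_dvd_modulus cong_iff_dvd_diff by blast+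
  obtain i j where ij: "t * i = a * j + 1"
    using bezout_nat[of t a] assms(2,3) by auto
  have "[r = r ^ (a * j) * r] (mod d)"
    using cong_scalar_right[OF cong_pow[OF ra, of j], of r]
    by (simp add: power_mult cong_sym)
  also have "r ^ (a * j) * r = (r ^ t) ^ i"
    by (simp add: power_mult[symmetric] ij)
  also have "[(r ^ t) ^ i = 1] (mod d)"
    using cong_pow[OF rt, of i] by simp
  finally have "d dvd r - 1"
    by (simp add: cong_iff_dvd_diff)
  with d_dvd assms(4) have "is_unit d"
    by (metis coprime_common_divisor)
  then show ?thesis
    unfolding d_def by (simp add: coprime_iff_gcd_eq_1)
qed

lemma coprime_power_diff:
  fixes r :: int and a s s' n :: nat
  assumes "[r ^ a = 1] (mod int n)" and "0 < a" and "coprime (s' - s) a" and "s < s'"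
    and "coprime (r - 1) (int n)"
  shows "coprime (r ^ s' - r ^ s) (int n)"
proof -
  have "coprime (r ^ a) (int n)"
    using cong_imp_coprime[OF cong_sym[OF assms(1)]] by simp
  then have "coprime r (int n)"
    using assms(2) by simp
  moreover have "coprime (r ^ (s' - s) - 1) (int n)"
    using coprime_power_minus_one assms by simp
  moreover have "r ^ s' - r ^ s = r ^ s * (r ^ (s' - s) - 1)"
    using assms(4) by (simp add: algebra_simps power_add[symmetric])
  ultimately show ?thesis
    by simp
qed

lemma (in group) generate_singleton_pow_eq_one:
  assumes "y \<in> carrier G" and "y [^] (n::nat) = \<one>" and "u \<in> generate G {y}"
  shows "u [^] n = \<one>"
proof -
  obtain k :: int where "u = y [^] k"
    using assms(1,3) generate_pow by auto
  then have "u [^] n = (y [^] n) [^] k"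
    using assms(1) by (simp add: int_pow_int[symmetric] int_pow_pow mult.commute)
  then show ?thesis
    using assms(2) by simp
qed

lemma (in group) mem_subgroup_of_int_pow_coprime:
  assumes "subgroup H G" and "u \<in> carrier G" and "u [^] (n::nat) = \<one>"
    and "coprime c (int n)" and "u [^] (c::int) \<in> H"
  shows "u \<in> H"
proof -
  obtain e where "[c * e = 1] (mod int n)"
    using cong_solve_coprime_int assms(4) by blast
  then obtain k where k: "c * e = 1 + int n * k"
    by (metis cong_iff_dvd_diff dvd_def eq_diff_eq add.commute)
  have "u = u [^] (1 + int n * k)"
    using assms(2,3) by (simp add: int_pow_mult int_pow_pow[symmetric] int_pow_int)
  also have "\<dots> = (u [^] c) [^] e"
    using int_pow_pow[OF assms(2)] k by simp
  also have "\<dots> \<in> H"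
    using subgroup_int_pow_closed[OF assms(1,5)] .
  finally show ?thesis .
qed

lemma (in group) int_pow_diff_mem_of_rcos_eq:
  assumes "subgroup H G" and "u \<in> carrier G" and "H #> u [^] (a::int) = H #> u [^] (b::int)"
  shows "u [^] (b - a) \<in> H"
proof -
  have "H #> (u [^] b \<otimes> inv (u [^] a)) = H"
    using coset_mult_inv2[OF assms(3)[symmetric]] assms(1,2) subgroup.subset by blast
  then have "u [^] b \<otimes> inv (u [^] a) \<in> H"
    using coset_join1 assms(1,2) by blast
  then show ?thesis
    using assms(2) by (simp add: int_pow_diff)
qed

theorem lemma3p1:
  fixes G (structure) and p m :: nat and r :: int and x y u :: 'a
    and M :: "'a set" and s s' :: nat
  assumes "group G"
    and "Factorial_Ring.prime p" and "m \<ge> 1" and "[r ^ p = 1] (mod int m)"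
    and "x \<in> carrier G" and "y \<in> carrier G"
    and "carrier G = generate G {x, y}"
    and "x [^] p = \<one>" and "y [^] m = \<one>"
    and "inv x \<otimes> y \<otimes> x = y [^] r"
    and "order G = p * m"
    and "\<forall>q::nat. Factorial_Ring.prime q \<and> q dvd order G \<longrightarrow> p \<le> q"
    and "gcd (int p * (r - 1)) (int m) = 1"
    and "subgroup M G" and "M \<subseteq> generate G {y}"
    and "u \<in> generate G {y}"
    and "s < s'" and "s' \<le> p - 1"
  shows "(u [^] (r ^ s) \<in> M \<longrightarrow> {u [^] (r ^ k) | k. k \<le> p - 1} \<subseteq> M)
       \<and> (M #> (u [^] (r ^ s)) = M #> (u [^] (r ^ s'))
            \<longrightarrow> {u [^] (r ^ k) | k. k \<le> p - 1} \<subseteq> M)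
       \<and> (u \<noteq> \<one> \<longrightarrow> u [^] (r ^ s) \<noteq> u [^] (r ^ s'))"
proof -
  interpret group G by fact
  have u: "u \<in> carrier G" "u [^] m = \<one>"
    using assms(6,9,16) generate_incl generate_singleton_pow_eq_one by auto
  have p_pos: "0 < p"
    using assms(2) prime_gt_0_nat by blast
  have "\<not> p dvd s' - s"
    using assms(17,18) p_pos by (simp add: nat_dvd_not_less)
  then have "coprime (s' - s) p"
    using assms(2) prime_imp_coprime coprime_commute by blast
  moreover have "coprime (r - 1) (int m)"
    using assms(13) by (simp add: coprime_iff_gcd_eq_1[symmetric])
  ultimately have "coprime (r ^ s' - r ^ s) (int m)" "coprime (r ^ s) (int m)"
    using coprime_power_diff[OF assms(4) p_pos] cong_imp_coprime[OF cong_sym[OF assms(4)]] p_pos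
      assms(17)
    by auto
  then have mem: "u \<in> H" if "subgroup H G"
    and "u [^] (r ^ s) \<in> H \<or> u [^] (r ^ s' - r ^ s) \<in> H" for H
    using that mem_subgroup_of_int_pow_coprime u by blast
  have orbit: "{u [^] (r ^ k) | k. k \<le> p - 1} \<subseteq> M" if "u \<in> M"
    using subgroup_int_pow_closed[OF assms(14) that] by auto
  show ?thesis
    using mem[OF assms(14)] mem[OF triv_subgroup] orbit int_pow_diff_mem_of_rcos_eq[OF assms(14) u(1)]
    by (auto simp: int_pow_diff u(1))
qed

end
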